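(* Let $G$ be a graph of order $n$ with negative inertia $\nu^-=\nu^-(G)$. For a clique partition $F$ of $G$, let $t_i^F$ be the $i$th largest clique-degree with respect to $F$. Then $$\mathcal E(G)\le 2\min_F\sum_{i=1}^{\nu^-}t_i^F,$$ where the minimum is over all clique partitions $F$ of $G$. Equality holds if $G$ is clique-regular with respect to a minimum clique partition of size $cp(G)=n-\nu^-$.
   Context: All graphs are finite and simple. $\mathcal E(G)$ is the sum of the absolute values of the adjacency eigenvalues of $G$ and $\nu^-(G)$ the number of negative adjacency eigenvalues. A clique partition of $G$ is a set $F$ of cliques (sets of pairwise adjacent vertices) such that every edge lies in exactly one clique of $F$; $cp(G)$ is the minimum size of a clique partition, and a minimum clique partition is one of that size. The clique-degree of a vertex is the number of cliques of $F$ containing it; $G$ is clique-regular with respect to $F$ if all clique-degrees are equal. *)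

theory Defs
  imports "Jordan_Normal_Form.Char_Poly"
begin

definition simple_graph :: "nat \<Rightarrow> (nat \<Rightarrow> nat \<Rightarrow> bool) \<Rightarrow> bool" where
  "simple_graph n E \<longleftrightarrow>
     (\<forall>u v. E u v \<longrightarrow> u < n \<and> v < n) \<and>
     (\<forall>u v. E u v \<longrightarrow> E v u) \<and> (\<forall>v. \<not> E v v)"

definition adj_matrix :: "nat \<Rightarrow> (nat \<Rightarrow> nat \<Rightarrow> bool) \<Rightarrow> real mat" where
  "adj_matrix n E = mat n n (\<lambda>(i, j). if E i j then 1 else 0)"

text \<open>Adjacency eigenvalues with multiplicity: the (real) roots of the characteristic
  polynomial of the real symmetric adjacency matrix.\<close>
definition adj_eigenvalues :: "nat \<Rightarrow> (nat \<Rightarrow> nat \<Rightarrow> bool) \<Rightarrow> real multiset" where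
  "adj_eigenvalues n E = proots (char_poly (adj_matrix n E))"

definition graph_energy :: "nat \<Rightarrow> (nat \<Rightarrow> nat \<Rightarrow> bool) \<Rightarrow> real" where
  "graph_energy n E = (\<Sum>\<^sub># (image_mset abs (adj_eigenvalues n E)))"

definition neg_inertia :: "nat \<Rightarrow> (nat \<Rightarrow> nat \<Rightarrow> bool) \<Rightarrow> nat" where
  "neg_inertia n E = size (filter_mset (\<lambda>x. x < 0) (adj_eigenvalues n E))"

definition is_clique :: "nat \<Rightarrow> (nat \<Rightarrow> nat \<Rightarrow> bool) \<Rightarrow> nat set \<Rightarrow> bool" where
  "is_clique n E C \<longleftrightarrow> C \<subseteq> {0..<n} \<and> (\<forall>u\<in>C. \<forall>v\<in>C. u \<noteq> v \<longrightarrow> E u v)"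

definition clique_partition :: "nat \<Rightarrow> (nat \<Rightarrow> nat \<Rightarrow> bool) \<Rightarrow> nat set set \<Rightarrow> bool" where
  "clique_partition n E F \<longleftrightarrow>
     (\<forall>C\<in>F. is_clique n E C) \<and>
     (\<forall>u v. E u v \<longrightarrow> (\<exists>!C. C \<in> F \<and> u \<in> C \<and> v \<in> C))"

definition cp :: "nat \<Rightarrow> (nat \<Rightarrow> nat \<Rightarrow> bool) \<Rightarrow> nat" where
  "cp n E = Min {card F | F. clique_partition n E F}"

definition clique_degree :: "nat set set \<Rightarrow> nat \<Rightarrow> nat" where
  "clique_degree F v = card {C \<in> F. v \<in> C}"

definition top_clique_degree_sum :: "nat \<Rightarrow> nat set set \<Rightarrow> nat \<Rightarrow> nat" where
  "top_clique_degree_sum n F k =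
     sum_list (take k (rev (sort (map (clique_degree F) [0..<n]))))"

definition clique_regular :: "nat \<Rightarrow> nat set set \<Rightarrow> bool" where
  "clique_regular n F \<longleftrightarrow>
     (\<forall>u<n. \<forall>v<n. clique_degree F u = clique_degree F v)"

end

theory Submission
  imports Defs "Jordan_Normal_Form.Schur_Decomposition"
begin

text \<open>Let \<open>F\<close> be a clique partition, \<open>M\<close> its vertex-clique incidence matrix and \<open>D\<close> the
  diagonal matrix of clique-degrees, so that \<open>A = M M\<^sup>T - D\<close>. For a unit eigenvector \<open>u\<close> with
  eigenvalue \<open>\<lambda> < 0\<close> this gives \<open>-\<lambda> \<le> u\<^sup>T D u\<close>. Since \<open>A\<close> has trace zero, the energy is
  \<open>-2\<close> times the sum of the negative eigenvalues, hence at most \<open>2 \<Sum>\<^sub>v d\<^sub>v w\<^sub>v\<close>, where \<open>w\<^sub>v\<close> is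
  the squared length of the projection of the \<open>v\<close>-th unit vector onto the negative eigenspace.
  These weights lie in \<open>[0,1]\<close> and sum to \<open>\<nu>\<^sup>-\<close>, so the bound is at most twice the sum of the
  \<open>\<nu>\<^sup>-\<close> largest clique-degrees.

  If all clique-degrees equal \<open>t\<close> and \<open>|F| = n - \<nu>\<^sup>-\<close>, then \<open>A + t I = M M\<^sup>T\<close> has rank at
  most \<open>n - \<nu>\<^sup>-\<close>, so at least \<open>\<nu>\<^sup>-\<close> eigenvalues are at most \<open>-t\<close>. These are exactly the
  negative ones, so the energy is at least \<open>2 \<nu>\<^sup>- t\<close>, which is the upper bound for \<open>F\<close>.\<close>

section \<open>Orthonormal bases\<close>

definition orthonormal_list :: "nat \<Rightarrow> real vec list \<Rightarrow> bool" where
  "orthonormal_list n us \<longleftrightarrow> set us \<subseteq> carrier_vec n \<and>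
     (\<forall>i<length us. \<forall>j<length us. us!i \<bullet> us!j = (if i = j then 1 else 0))"

definition orthonormal_basis :: "nat \<Rightarrow> real vec list \<Rightarrow> bool" where
  "orthonormal_basis n us \<longleftrightarrow> length us = n \<and> orthonormal_list n us"

lemma orthonormal_listD:
  assumes "orthonormal_list n us"
  shows "\<And>i. i < length us \<Longrightarrow> us!i \<in> carrier_vec n"
    and "\<And>i j. i < length us \<Longrightarrow> j < length us \<Longrightarrow> us!i \<bullet> us!j = (if i = j then 1 else 0)"
  using assms unfolding orthonormal_list_def by auto

lemma orthonormal_list_ConsD:
  assumes on: "orthonormal_list n (w # us)"
  shows "w \<in> carrier_vec n" and "w \<bullet> w = 1" and "\<And>u. u \<in> set us \<Longrightarrow> u \<bullet> w = 0"
    and "orthonormal_list n us"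
proof -
  have "set (w # us) \<subseteq> carrier_vec n"
    using on unfolding orthonormal_list_def by (rule conjunct1)
  then have w: "w \<in> carrier_vec n" and us: "set us \<subseteq> carrier_vec n" by simp_all
  then show "w \<in> carrier_vec n" by simp
  show "w \<bullet> w = 1" using orthonormal_listD(2)[OF on, of 0 0] by simp
  show "u \<bullet> w = 0" if "u \<in> set us" for u
  proof -
    from that obtain j where "j < length us" "us!j = u" by (auto simp: in_set_conv_nth)
    then show ?thesis using orthonormal_listD(2)[OF on, of "Suc j" 0] by auto
  qed
  show "orthonormal_list n us"
    unfolding orthonormal_list_def
  proof (intro conjI allI impI)
    show "set us \<subseteq> carrier_vec n" by (rule us)
    fix i j assume "i < length us" "j < length us"
    then show "us!i \<bullet> us!j = (if i = j then 1 else 0)"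
      using orthonormal_listD(2)[OF on, of "Suc i" "Suc j"] by simp
  qed
qed

lemma orthonormal_list_ConsI:
  assumes w: "w \<in> carrier_vec n" and w1: "w \<bullet> w = 1"
    and orth: "\<And>u. u \<in> set us \<Longrightarrow> u \<bullet> w = 0" and on: "orthonormal_list n us"
  shows "orthonormal_list n (w # us)"
proof -
  have us: "set us \<subseteq> carrier_vec n" using on unfolding orthonormal_list_def by simp
  have orth': "w \<bullet> us!j = 0" "us!j \<bullet> w = 0" if "j < length us" for j
  proof -
    have "us!j \<in> set us" using that by simp
    then show "us!j \<bullet> w = 0" "w \<bullet> us!j = 0"
      using orth comm_scalar_prod[OF w, of "us!j"] us by auto
  qed
  show ?thesis unfolding orthonormal_list_def
  proof (intro conjI allI impI)
    show "set (w # us) \<subseteq> carrier_vec n" using w us by simp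
    fix i j assume i: "i < length (w # us)" and j: "j < length (w # us)"
    show "(w # us) ! i \<bullet> (w # us) ! j = (if i = j then 1 else 0)"
    proof (cases i; cases j)
      fix j' assume "i = 0" "j = Suc j'"
      then show ?thesis using j orth' by simp
    next
      fix i' assume "i = Suc i'" "j = 0"
      then show ?thesis using i orth' by simp
    next
      fix i' j' assume "i = Suc i'" "j = Suc j'"
      then show ?thesis using i j orthonormal_listD(2)[OF on] by simp
    qed (use w1 in simp)
  qed
qed

lemma orthonormal_basis_mat:
  assumes "orthonormal_basis n us"
  defines "U \<equiv> mat_of_cols n us"
  shows "U \<in> carrier_mat n n" "U\<^sup>T * U = 1\<^sub>m n" "U * U\<^sup>T = 1\<^sub>m n"
proof -
  have len: "length us = n" and car: "\<And>k. k < n \<Longrightarrow> us!k \<in> carrier_vec n"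
    using assms orthonormal_listD unfolding orthonormal_basis_def by auto
  show U: "U \<in> carrier_mat n n" using len unfolding U_def by auto
  show UTU: "U\<^sup>T * U = 1\<^sub>m n"
  proof (rule eq_matI)
    fix i j assume "i < dim_row (1\<^sub>m n)" "j < dim_col (1\<^sub>m n)"
    then show "(U\<^sup>T * U) $$ (i,j) = 1\<^sub>m n $$ (i,j)"
      using assms len car orthonormal_listD(2) unfolding U_def orthonormal_basis_def by simp
  qed (use U in auto)
  show "U * U\<^sup>T = 1\<^sub>m n" using mat_mult_left_right_inverse[of "U\<^sup>T" n U] U UTU by auto
qed

lemma orthonormal_basis_row_sum:
  assumes on: "orthonormal_basis n us" and "a < n" "b < n"
  shows "(\<Sum>k<n. us!k$a * us!k$b) = (if a = b then 1 else 0)"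
proof -
  define U where "U = mat_of_cols n us"
  note U = orthonormal_basis_mat[OF on, folded U_def]
  have "(U * U\<^sup>T) $$ (a,b) = (\<Sum>k<n. us!k$a * us!k$b)"
    using assms U(1) unfolding U_def orthonormal_basis_def
    by (auto simp: scalar_prod_def row_def atLeast0LessThan mat_of_cols_def intro!: sum.cong)
  then show ?thesis using U(3) assms by simp
qed

lemma orthonormal_basis_expansion:
  assumes on: "orthonormal_basis n us" and x: "x \<in> carrier_vec n" and a: "a < n"
  shows "(\<Sum>k<n. (x \<bullet> us!k) * us!k$a) = x$a"
proof -
  have dim: "dim_vec (us!k) = n" if "k < n" for k
    using on orthonormal_listD(1) that unfolding orthonormal_basis_def by auto
  have "(\<Sum>k<n. (x \<bullet> us!k) * us!k$a) = (\<Sum>k<n. \<Sum>b<n. x$b * (us!k$b * us!k$a))"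
    using dim
    by (auto simp: scalar_prod_def sum_distrib_right atLeast0LessThan mult.assoc intro!: sum.cong)
  also have "\<dots> = (\<Sum>b<n. x$b * (\<Sum>k<n. us!k$b * us!k$a))"
    by (subst sum.swap) (simp add: sum_distrib_left)
  also have "\<dots> = (\<Sum>b<n. x$b * (if b = a then 1 else 0))"
    using orthonormal_basis_row_sum[OF on] a by (intro sum.cong) auto
  also have "\<dots> = x$a" using a by (simp add: if_distrib cong: if_cong)
  finally show ?thesis .
qed

lemma orthonormal_basis_vec_eqI:
  assumes on: "orthonormal_basis n us" and x: "x \<in> carrier_vec n" and z: "z \<in> carrier_vec n"
    and eq: "\<And>k. k < n \<Longrightarrow> x \<bullet> us!k = z \<bullet> us!k"
  shows "x = z"
proof (rule eq_vecI)
  fix a assume "a < dim_vec z"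
  then have a: "a < n" using z by simp
  have "x$a = (\<Sum>k<n. (x \<bullet> us!k) * us!k$a)" using orthonormal_basis_expansion[OF on x a] by simp
  also have "\<dots> = (\<Sum>k<n. (z \<bullet> us!k) * us!k$a)" using eq by simp
  also have "\<dots> = z$a" using orthonormal_basis_expansion[OF on z a] .
  finally show "x$a = z$a" .
qed (use x z in simp)

lemma orthonormal_list_normalize:
  fixes ws :: "real vec list"
  assumes orth: "corthogonal ws" and car: "set ws \<subseteq> carrier_vec n"
  shows "orthonormal_list n (map (\<lambda>w. (1 / sqrt (w \<bullet> w)) \<cdot>\<^sub>v w) ws)"
    (is "orthonormal_list n ?us")
proof -
  have pos: "ws!i \<bullet> ws!i > 0" if "i < length ws" for i
  proof -
    have "ws!i \<bullet> ws!i \<noteq> 0" using orth that unfolding corthogonal_def by auto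
    moreover have "ws!i \<bullet> ws!i \<ge> 0" unfolding scalar_prod_def by (intro sum_nonneg) auto
    ultimately show ?thesis by linarith
  qed
  show ?thesis unfolding orthonormal_list_def
  proof (intro conjI allI impI)
    show "set ?us \<subseteq> carrier_vec n" using car by auto
    fix i j assume "i < length ?us" "j < length ?us"
    then have i: "i < length ws" and j: "j < length ws" by simp_all
    then have "ws!i \<in> carrier_vec n" "ws!j \<in> carrier_vec n" using car by auto
    then have "?us!i \<bullet> ?us!j =
        (1 / sqrt (ws!i \<bullet> ws!i)) * (1 / sqrt (ws!j \<bullet> ws!j)) * (ws!i \<bullet> ws!j)"
      using i j by (simp add: smult_scalar_prod_distrib scalar_prod_smult_distrib)
    also have "\<dots> = (if i = j then 1 else 0)"
    proof (cases "i = j")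
      case True
      then show ?thesis using pos[OF i] real_sqrt_mult_self[of "ws!i \<bullet> ws!i"]
        by (simp add: field_simps)
    next
      case False
      then show ?thesis using orth i j unfolding corthogonal_def by auto
    qed
    finally show "?us!i \<bullet> ?us!j = (if i = j then 1 else 0)" .
  qed
qed

lemma orthonormal_basis_extend:
  fixes v :: "real vec"
  assumes v: "v \<in> carrier_vec n" and v0: "v \<noteq> 0\<^sub>v n"
  obtains w ws c where "orthonormal_basis n (w # ws)" and "w = c \<cdot>\<^sub>v v"
proof -
  interpret cof_vec_space n "TYPE(real)" .
  define b where "b = basis_completion v"
  note bc = basis_completion[OF v v0, folded b_def]
  define ws0 where "ws0 = gram_schmidt n b"
  note gs = gram_schmidt_result[OF bc(2) bc(4) bc(5) ws0_def]
  let ?ws = "map (\<lambda>w. (1 / sqrt (w \<bullet> w)) \<cdot>\<^sub>v w) ws0"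
  have n0: "n \<noteq> 0" using v v0 by auto
  then obtain vs where bv: "b = v # vs" using bc(6,7) by (cases b) auto
  have len0: "length ws0 = n" using gs(4) bc(6) by simp
  have hd0: "ws0 ! 0 = v" using gram_schmidt_hd[OF v, of vs] gs(4) bc(6) n0
    unfolding ws0_def bv by (metis hd_conv_nth list.size(3))
  have "orthonormal_basis n ?ws"
    using orthonormal_list_normalize[OF gs(2,3)] len0 unfolding orthonormal_basis_def by simp
  moreover have "?ws!0 = (1 / sqrt (v \<bullet> v)) \<cdot>\<^sub>v v" using n0 len0 hd0 by simp
  moreover obtain w ws where "?ws = w # ws" using n0 len0 by (cases ?ws) auto
  ultimately show thesis using that by simp
qed

definition lin_comb_vec :: "nat \<Rightarrow> real vec list \<Rightarrow> real vec \<Rightarrow> real vec" where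
  "lin_comb_vec n vs y = vec n (\<lambda>a. \<Sum>j<length vs. y$j * vs!j$a)"

lemma lin_comb_vec_carrier [simp]: "lin_comb_vec n vs y \<in> carrier_vec n"
  unfolding lin_comb_vec_def by simp

lemma lin_comb_vec_smult:
  assumes "y \<in> carrier_vec (length vs)"
  shows "lin_comb_vec n vs (c \<cdot>\<^sub>v y) = c \<cdot>\<^sub>v lin_comb_vec n vs y"
  unfolding lin_comb_vec_def using assms
  by (intro eq_vecI) (auto simp: sum_distrib_left mult.assoc)

lemma lin_comb_vec_scalar_prod:
  assumes "x \<in> carrier_vec n"
  shows "lin_comb_vec n vs y \<bullet> x = (\<Sum>j<length vs. y$j * (vs!j \<bullet> x))"
proof -
  have "lin_comb_vec n vs y \<bullet> x = (\<Sum>a<n. \<Sum>j<length vs. y$j * (vs!j$a * x$a))"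
    unfolding lin_comb_vec_def scalar_prod_def using assms
    by (simp add: atLeast0LessThan sum_distrib_right mult.assoc)
  also have "\<dots> = (\<Sum>j<length vs. y$j * (vs!j \<bullet> x))"
    using assms by (subst sum.swap) (simp add: scalar_prod_def sum_distrib_left atLeast0LessThan)
  finally show ?thesis .
qed

lemma lin_comb_vec_scalar_prod_member:
  assumes on: "orthonormal_list n vs" and k: "k < length vs"
  shows "lin_comb_vec n vs y \<bullet> vs!k = y$k"
proof -
  have "lin_comb_vec n vs y \<bullet> vs!k = (\<Sum>j<length vs. y$j * (if j = k then 1 else 0))"
    using lin_comb_vec_scalar_prod orthonormal_listD[OF on] k by simp
  then show ?thesis using k by (simp add: if_distrib cong: if_cong)
qed

lemma lin_comb_vec_scalar_prod_orthogonal: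
  assumes "w \<in> carrier_vec n" and "\<And>v. v \<in> set vs \<Longrightarrow> v \<bullet> w = 0"
  shows "lin_comb_vec n vs y \<bullet> w = 0"
  using assms by (simp add: lin_comb_vec_scalar_prod)

lemma lin_comb_vec_inner:
  assumes on: "orthonormal_list n vs" and z: "z \<in> carrier_vec (length vs)"
  shows "lin_comb_vec n vs y \<bullet> lin_comb_vec n vs z = y \<bullet> z"
proof -
  have "vs!j \<bullet> lin_comb_vec n vs z = z$j" if "j < length vs" for j
    using lin_comb_vec_scalar_prod_member[OF on that] orthonormal_listD(1)[OF on that]
    by (metis comm_scalar_prod lin_comb_vec_carrier)
  then have "lin_comb_vec n vs y \<bullet> lin_comb_vec n vs z = (\<Sum>j<length vs. y$j * z$j)"
    by (simp add: lin_comb_vec_scalar_prod)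
  also have "\<dots> = y \<bullet> z" using z by (simp add: scalar_prod_def atLeast0LessThan)
  finally show ?thesis .
qed

lemma orthonormal_list_map_lin_comb_vec:
  assumes "orthonormal_list n vs" and "orthonormal_list (length vs) ys"
  shows "orthonormal_list n (map (lin_comb_vec n vs) ys)"
  using assms lin_comb_vec_inner unfolding orthonormal_list_def
  by (auto simp: subset_iff in_set_conv_nth)

lemma orthonormal_basis_Cons_lin_comb_vec:
  assumes on: "orthonormal_basis n (w # vs)" and on_ys: "orthonormal_basis (length vs) ys"
  shows "orthonormal_basis n (w # map (lin_comb_vec n vs) ys)"
proof -
  have on_wvs: "orthonormal_list n (w # vs)" and len: "Suc (length vs) = n"
    using on unfolding orthonormal_basis_def by simp_all
  note w = orthonormal_list_ConsD[OF on_wvs]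
  have orth: "u \<bullet> w = 0" if "u \<in> set (map (lin_comb_vec n vs) ys)" for u
    using that lin_comb_vec_scalar_prod_orthogonal[OF w(1) w(3)] by auto
  have "orthonormal_list n (map (lin_comb_vec n vs) ys)"
    using orthonormal_list_map_lin_comb_vec[OF w(4)] on_ys unfolding orthonormal_basis_def by simp
  with orth have "orthonormal_list n (w # map (lin_comb_vec n vs) ys)"
    by (rule orthonormal_list_ConsI[OF w(1,2)])
  then show ?thesis using len on_ys unfolding orthonormal_basis_def by simp
qed

section \<open>The spectral theorem for real symmetric matrices\<close>

lemma symmetric_mult_scalar_prod:
  fixes A :: "'a :: comm_semiring_0 mat"
  assumes "A \<in> carrier_mat n n" "A\<^sup>T = A" "x \<in> carrier_vec n" "y \<in> carrier_vec n"
  shows "(A *\<^sub>v x) \<bullet> y = x \<bullet> (A *\<^sub>v y)"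
  using transpose_vec_mult_scalar[of A n n y x] assms by simp

lemma symmetric_complexified_eigenvalue_real:
  fixes A :: "real mat"
  assumes A: "A \<in> carrier_mat n n" and sym: "A\<^sup>T = A"
    and v: "v \<in> carrier_vec n" "v \<noteq> 0\<^sub>v n"
    and eig: "map_mat complex_of_real A *\<^sub>v v = l \<cdot>\<^sub>v v"
  shows "Im l = 0"
proof -
  have Aji: "A$$(j,i) = A$$(i,j)" if "i < n" "j < n" for i j
    using that A sym by (metis carrier_matD index_transpose_mat(1))
  have Av: "(\<Sum>j<n. complex_of_real (A$$(i,j)) * v$j) = l * v$i" if i: "i < n" for i
  proof -
    have "(map_mat complex_of_real A *\<^sub>v v) $ i = l * v$i" using eig i v(1) by simp
    then show ?thesis using i A v(1) by (simp add: scalar_prod_def row_def atLeast0LessThan)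
  qed
  define s where "s = (\<Sum>i<n. \<Sum>j<n. complex_of_real (A$$(i,j)) * v$j * cnj (v$i))"
  define r where "r = (\<Sum>i<n. (cmod (v$i))\<^sup>2)"
  have s_eq: "s = l * r"
  proof -
    have "s = (\<Sum>i<n. (\<Sum>j<n. complex_of_real (A$$(i,j)) * v$j) * cnj (v$i))"
      unfolding s_def by (simp add: sum_distrib_right)
    also have "\<dots> = l * (\<Sum>i<n. v$i * cnj (v$i))"
      using Av by (simp add: sum_distrib_left mult.assoc)
    finally show ?thesis
      unfolding r_def of_real_sum complex_norm_square by simp
  qed
  have "cnj s = (\<Sum>i<n. \<Sum>j<n. complex_of_real (A$$(i,j)) * cnj (v$j) * v$i)"
    unfolding s_def by (simp add: cnj_sum)
  also have "\<dots> = (\<Sum>j<n. \<Sum>i<n. complex_of_real (A$$(i,j)) * cnj (v$j) * v$i)"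
    by (rule sum.swap)
  also have "\<dots> = s"
    unfolding s_def using Aji by (intro sum.cong refl) (auto simp: mult.commute mult.left_commute)
  finally have s_real: "cnj s = s" .
  obtain i where i: "i < n" "v$i \<noteq> 0"
    using v by (metis carrier_vecD eq_vecI index_zero_vec(1,2))
  have "r \<ge> (cmod (v$i))\<^sup>2" unfolding r_def using i by (intro member_le_sum) auto
  moreover have "(cmod (v$i))\<^sup>2 > 0" using i by simp
  ultimately have "r > 0" by linarith
  then have "l = s / complex_of_real r" using s_eq by simp
  then have "cnj l = l" using s_real by simp
  then show ?thesis by (metis cnj.simps(2) neg_equal_zero)
qed

lemma symmetric_real_eigenvector:
  fixes A :: "real mat"
  assumes A: "A \<in> carrier_mat n n" and sym: "A\<^sup>T = A" and n: "n > 0"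
  obtains e v where "v \<in> carrier_vec n" "v \<noteq> 0\<^sub>v n" "A *\<^sub>v v = e \<cdot>\<^sub>v v"
proof -
  define B where "B = map_mat complex_of_real A"
  have B: "B \<in> carrier_mat n n" using A by (simp add: B_def)
  obtain as where cp: "char_poly B = (\<Prod>a\<leftarrow>as. [:-a,1:])" and len: "length as = n"
    using char_poly_factorized[OF B] by blast
  then obtain l where "l \<in> set as" using n by (cases as) auto
  then have root: "poly (char_poly B) l = 0" unfolding cp by (rule linear_poly_root)
  then obtain v where "v \<in> carrier_vec n" "v \<noteq> 0\<^sub>v n" "B *\<^sub>v v = l \<cdot>\<^sub>v v"
    using eigenvalue_root_char_poly[OF B] B unfolding eigenvalue_def eigenvector_def by auto
  then have "Im l = 0"
    using symmetric_complexified_eigenvalue_real[OF A sym] unfolding B_def by blast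
  then have "l = complex_of_real (Re l)" by (simp add: complex_eq_iff)
  then have "complex_of_real (poly (char_poly A) (Re l)) = 0"
    using root of_real_hom.char_poly_hom[OF A] unfolding B_def
    by (metis of_real_hom.poly_map_poly)
  then have "eigenvalue A (Re l)" using eigenvalue_root_char_poly[OF A] by simp
  then show thesis using that A unfolding eigenvalue_def eigenvector_def by auto
qed

definition compression :: "real mat \<Rightarrow> real vec list \<Rightarrow> real mat" where
  "compression A vs = mat (length vs) (length vs) (\<lambda>(i, j). vs!i \<bullet> (A *\<^sub>v vs!j))"

lemma compression_carrier: "compression A vs \<in> carrier_mat (length vs) (length vs)"
  unfolding compression_def by simp

lemma compression_symmetric:
  assumes "A \<in> carrier_mat n n" "A\<^sup>T = A" "set vs \<subseteq> carrier_vec n"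
  shows "(compression A vs)\<^sup>T = compression A vs"
proof (rule eq_matI)
  fix i j assume "i < dim_row (compression A vs)" "j < dim_col (compression A vs)"
  then have "i < length vs" "j < length vs" by (simp_all add: compression_def)
  then have "vs!j \<in> carrier_vec n" "vs!i \<in> carrier_vec n" using assms(3) by auto
  then have "vs!j \<bullet> (A *\<^sub>v vs!i) = vs!i \<bullet> (A *\<^sub>v vs!j)"
    using symmetric_mult_scalar_prod[OF assms(1,2)] comm_scalar_prod assms(1)
    by (metis mult_mat_vec_carrier)
  with \<open>i < length vs\<close> \<open>j < length vs\<close>
  show "(compression A vs)\<^sup>T $$ (i, j) = compression A vs $$ (i, j)"
    by (simp add: compression_def)
qed (simp_all add: compression_def)

text \<open>Deflation: as \<open>w\<close> is an eigenvector of the symmetric matrix \<open>A\<close>, the span of \<open>vs\<close> is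
  \<open>A\<close>-invariant.\<close>
lemma mult_lin_comb_vec_compression:
  assumes A: "A \<in> carrier_mat n n" and sym: "A\<^sup>T = A"
    and on: "orthonormal_basis n (w # vs)" and eig: "A *\<^sub>v w = e \<cdot>\<^sub>v w"
    and y: "y \<in> carrier_vec (length vs)"
  shows "A *\<^sub>v lin_comb_vec n vs y = lin_comb_vec n vs (compression A vs *\<^sub>v y)"
proof (rule orthonormal_basis_vec_eqI[OF on])
  have on_wvs: "orthonormal_list n (w # vs)" using on unfolding orthonormal_basis_def by simp
  note w = orthonormal_list_ConsD(1)[OF on_wvs] and orth = orthonormal_list_ConsD(3)[OF on_wvs]
    and on_vs = orthonormal_list_ConsD(4)[OF on_wvs]
  then have vs: "set vs \<subseteq> carrier_vec n" unfolding orthonormal_list_def by simp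
  show car: "A *\<^sub>v lin_comb_vec n vs y \<in> carrier_vec n" using A by simp
  show "lin_comb_vec n vs (compression A vs *\<^sub>v y) \<in> carrier_vec n" by simp
  fix k assume k: "k < n"
  show "(A *\<^sub>v lin_comb_vec n vs y) \<bullet> (w # vs)!k = lin_comb_vec n vs (compression A vs *\<^sub>v y) \<bullet> (w # vs)!k"
  proof (cases k)
    case 0
    have "(A *\<^sub>v lin_comb_vec n vs y) \<bullet> w = e * (lin_comb_vec n vs y \<bullet> w)"
      using symmetric_mult_scalar_prod[OF A sym _ w] eig w by simp
    then show ?thesis
      using 0 lin_comb_vec_scalar_prod_orthogonal[OF w orth] by simp
  next
    case (Suc i)
    then have i: "i < length vs" using k on unfolding orthonormal_basis_def by simp
    then have vi: "vs!i \<in> carrier_vec n" using vs by auto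
    have "(A *\<^sub>v lin_comb_vec n vs y) \<bullet> vs!i = lin_comb_vec n vs y \<bullet> (A *\<^sub>v vs!i)"
      using symmetric_mult_scalar_prod[OF A sym _ vi] by simp
    also have "\<dots> = (\<Sum>j<length vs. y$j * (vs!j \<bullet> (A *\<^sub>v vs!i)))"
      using A vi by (simp add: lin_comb_vec_scalar_prod)
    also have "\<dots> = (\<Sum>j<length vs. compression A vs $$ (i, j) * y$j)"
    proof (intro sum.cong refl)
      fix j assume "j \<in> {..<length vs}"
      then have "compression A vs $$ (i, j) = compression A vs $$ (j, i)"
        using compression_symmetric[OF A sym vs] i
        by (metis compression_carrier carrier_matD index_transpose_mat(1) lessThan_iff)
      then show "y$j * (vs!j \<bullet> (A *\<^sub>v vs!i)) = compression A vs $$ (i, j) * y$j"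
        using i \<open>j \<in> _\<close> by (simp add: compression_def)
    qed
    also have "\<dots> = (compression A vs *\<^sub>v y) $ i"
      using i y compression_carrier[of A vs]
      by (simp add: scalar_prod_def row_def atLeast0LessThan)
    also have "\<dots> = lin_comb_vec n vs (compression A vs *\<^sub>v y) \<bullet> vs!i"
      using lin_comb_vec_scalar_prod_member[OF on_vs i] by simp
    finally show ?thesis using Suc by simp
  qed
qed

theorem symmetric_orthonormal_eigenbasis:
  fixes A :: "real mat"
  assumes "A \<in> carrier_mat n n" and "A\<^sup>T = A"
  obtains us es where "orthonormal_basis n us" and "length es = n"
    and "\<And>i. i < n \<Longrightarrow> A *\<^sub>v us!i = es!i \<cdot>\<^sub>v us!i"
  using assms
proof (induction n arbitrary: A thesis)
  case 0
  then show ?case by (auto simp: orthonormal_basis_def orthonormal_list_def)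
next
  case (Suc m)
  have A: "A \<in> carrier_mat (Suc m) (Suc m)" and sym: "A\<^sup>T = A" by fact+
  obtain e v where v: "v \<in> carrier_vec (Suc m)" "v \<noteq> 0\<^sub>v (Suc m)" and "A *\<^sub>v v = e \<cdot>\<^sub>v v"
    using symmetric_real_eigenvector[OF A sym] by blast
  obtain w vs c where on: "orthonormal_basis (Suc m) (w # vs)" and wv: "w = c \<cdot>\<^sub>v v"
    using orthonormal_basis_extend[OF v] by blast
  have Aw: "A *\<^sub>v w = e \<cdot>\<^sub>v w"
    unfolding wv using mult_mat_vec[OF A v(1)] \<open>A *\<^sub>v v = e \<cdot>\<^sub>v v\<close>
    by (simp add: smult_smult_assoc mult.commute)
  have len: "length vs = m" using on unfolding orthonormal_basis_def by simp
  have vs: "set vs \<subseteq> carrier_vec (Suc m)"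
    using on unfolding orthonormal_basis_def orthonormal_list_def by simp
  define C where "C = compression A vs"
  have C: "C \<in> carrier_mat m m" using compression_carrier len unfolding C_def by metis
  obtain ys ds where on_ys: "orthonormal_basis m ys" and len_ds: "length ds = m"
    and eig_ys: "\<And>i. i < m \<Longrightarrow> C *\<^sub>v ys!i = ds!i \<cdot>\<^sub>v ys!i"
    using Suc.IH[OF _ C] compression_symmetric[OF A sym vs] unfolding C_def by blast
  have ys: "ys!i \<in> carrier_vec (length vs)" if "i < m" for i
    using on_ys that len orthonormal_listD(1) unfolding orthonormal_basis_def by auto
  define us where "us = w # map (lin_comb_vec (Suc m) vs) ys"
  have "orthonormal_basis (Suc m) us"
    unfolding us_def using orthonormal_basis_Cons_lin_comb_vec[OF on] on_ys len by simp
  moreover have "length (e # ds) = Suc m" using len_ds by simp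
  moreover have "A *\<^sub>v us!i = (e # ds)!i \<cdot>\<^sub>v us!i" if "i < Suc m" for i
  proof (cases i)
    case 0
    then show ?thesis using Aw by (simp add: us_def)
  next
    case (Suc j)
    then have j: "j < m" using that by simp
    have "A *\<^sub>v lin_comb_vec (Suc m) vs (ys!j) = lin_comb_vec (Suc m) vs (C *\<^sub>v ys!j)"
      using mult_lin_comb_vec_compression[OF A sym on Aw ys[OF j]] unfolding C_def .
    also have "\<dots> = ds!j \<cdot>\<^sub>v lin_comb_vec (Suc m) vs (ys!j)"
      using eig_ys[OF j] lin_comb_vec_smult[OF ys[OF j]] by simp
    finally show ?thesis using Suc j on_ys by (simp add: us_def orthonormal_basis_def)
  qed
  ultimately show ?case using Suc.prems(1) by blast
qed

lemma scalar_prod_mult_mat_vec_sum: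
  fixes A :: "'a :: comm_semiring_0 mat"
  assumes "A \<in> carrier_mat n n" "x \<in> carrier_vec n" "y \<in> carrier_vec n"
  shows "x \<bullet> (A *\<^sub>v y) = (\<Sum>a<n. \<Sum>b<n. A$$(a,b) * x$a * y$b)"
proof -
  have "x \<bullet> (A *\<^sub>v y) = (\<Sum>a<n. x$a * (\<Sum>b<n. A$$(a,b) * y$b))"
    using assms by (simp add: scalar_prod_def atLeast0LessThan row_def)
  also have "\<dots> = (\<Sum>a<n. \<Sum>b<n. A$$(a,b) * x$a * y$b)"
    by (simp add: sum_distrib_left mult.commute mult.left_commute)
  finally show ?thesis .
qed

lemma char_poly_orthonormal_eigenbasis:
  fixes A :: "real mat"
  assumes A: "A \<in> carrier_mat n n" and on: "orthonormal_basis n us" and les: "length es = n"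
    and eig: "\<And>i. i < n \<Longrightarrow> A *\<^sub>v us!i = es!i \<cdot>\<^sub>v us!i"
  shows "char_poly A = (\<Prod>a\<leftarrow>es. [:-a, 1:])"
proof -
  define U where "U = mat_of_cols n us"
  define D where "D = mat n n (\<lambda>(i,j). if i = j then es!i else (0::real))"
  note U = orthonormal_basis_mat[OF on, folded U_def]
  have len: "length us = n" and car: "\<And>k. k < n \<Longrightarrow> us!k \<in> carrier_vec n"
    using on orthonormal_listD(1) unfolding orthonormal_basis_def by auto
  have D: "D \<in> carrier_mat n n" unfolding D_def by simp
  have AU: "A * U = U * D"
  proof (rule eq_matI)
    fix i k assume "i < dim_row (U * D)" "k < dim_col (U * D)"
    then have i: "i < n" and k: "k < n" using U D by auto
    have "(A * U) $$ (i,k) = (A *\<^sub>v us!k) $ i"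
      using A U(1) i k len car unfolding U_def by (simp add: col_mat_of_cols)
    also have "\<dots> = es!k * us!k$i" using eig[OF k] car[OF k] i by simp
    also have "\<dots> = (\<Sum>j<n. U$$(i,j) * D$$(j,k))"
      using i k len by (simp add: U_def D_def mat_of_cols_def if_distrib cong: if_cong)
    also have "\<dots> = (U * D) $$ (i,k)"
      using U D i k by (simp add: scalar_prod_def atLeast0LessThan)
    finally show "(A * U) $$ (i,k) = (U * D) $$ (i,k)" .
  qed (use A U D in auto)
  have "A = (A * U) * U\<^sup>T" using A U by (simp add: assoc_mult_mat[of A n n U n])
  then have "similar_mat_wit A D U U\<^sup>T"
    unfolding similar_mat_wit_def Let_def AU using A D U by auto
  then have "char_poly A = char_poly D"
    by (intro char_poly_similar) (auto simp: similar_mat_def)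
  also have "\<dots> = (\<Prod>a\<leftarrow>diag_mat D. [:-a, 1:])"
    by (rule char_poly_upper_triangular[OF D]) (auto simp: upper_triangular_def D_def)
  also have "diag_mat D = es"
    unfolding diag_mat_def D_def using les by (intro nth_equalityI) auto
  finally show ?thesis .
qed

lemma proots_prod_linear_factors: "proots (\<Prod>a\<leftarrow>es. [:-a, 1:]) = mset (es :: real list)"
proof (induction es)
  case (Cons a es)
  have "(\<Prod>a\<leftarrow>es. [:-a, 1::real:]) \<noteq> 0" by (auto simp: prod_list_zero_iff)
  with Cons show ?case by (simp add: proots_mult del: mult_pCons_left)
qed simp

lemma sum_orthonormal_eigenvalues_eq_trace:
  fixes A :: "real mat"
  assumes A: "A \<in> carrier_mat n n" and on: "orthonormal_basis n us"
    and eig: "\<And>i. i < n \<Longrightarrow> A *\<^sub>v us!i = es!i \<cdot>\<^sub>v us!i"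
  shows "(\<Sum>i<n. es!i) = (\<Sum>a<n. A$$(a,a))"
proof -
  have car: "\<And>i. i < n \<Longrightarrow> us!i \<in> carrier_vec n"
    and unit: "\<And>i. i < n \<Longrightarrow> us!i \<bullet> us!i = 1"
    using on orthonormal_listD unfolding orthonormal_basis_def by auto
  have "es!i = us!i \<bullet> (A *\<^sub>v us!i)" if "i < n" for i
    using eig[OF that] unit[OF that] car[OF that] by simp
  then have "(\<Sum>i<n. es!i) = (\<Sum>i<n. \<Sum>a<n. \<Sum>b<n. A$$(a,b) * us!i$a * us!i$b)"
    using scalar_prod_mult_mat_vec_sum[OF A car car] by simp
  also have "\<dots> = (\<Sum>a<n. \<Sum>i<n. \<Sum>b<n. A$$(a,b) * us!i$a * us!i$b)" by (rule sum.swap)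
  also have "\<dots> = (\<Sum>a<n. \<Sum>b<n. \<Sum>i<n. A$$(a,b) * us!i$a * us!i$b)"
    by (rule sum.cong[OF refl], rule sum.swap)
  also have "\<dots> = (\<Sum>a<n. \<Sum>b<n. A$$(a,b) * (\<Sum>i<n. us!i$a * us!i$b))"
    by (simp add: sum_distrib_left mult.assoc)
  also have "\<dots> = (\<Sum>a<n. \<Sum>b<n. A$$(a,b) * (if a = b then 1 else 0))"
    using orthonormal_basis_row_sum[OF on] by (intro sum.cong refl) simp
  also have "\<dots> = (\<Sum>a<n. A$$(a,a))" by (simp add: if_distrib cong: if_cong)
  finally show ?thesis .
qed

section \<open>Finite sums and linear systems\<close>

text \<open>Gaussian elimination: solve the first equation for a variable with a nonzero coefficient
  and substitute into the remaining ones.\<close>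
lemma homogeneous_system_nontrivial_solution:
  fixes y :: "'i \<Rightarrow> 'j \<Rightarrow> 'a :: field"
  assumes "finite J" "finite P" "card J < card P"
  obtains c where "\<exists>i\<in>P. c i \<noteq> 0" and "\<And>j. j \<in> J \<Longrightarrow> (\<Sum>i\<in>P. c i * y i j) = 0"
  using assms
proof (induction J arbitrary: P y thesis rule: finite_induct)
  case empty
  then obtain i where "i \<in> P" by fastforce
  then show ?case using empty.prems(1)[of "\<lambda>_. 1"] by auto
next
  case (insert j0 J)
  show ?case
  proof (cases "\<forall>i\<in>P. y i j0 = 0")
    case True
    obtain c where "\<exists>i\<in>P. c i \<noteq> 0" "\<And>j. j \<in> J \<Longrightarrow> (\<Sum>i\<in>P. c i * y i j) = 0"
      using insert.IH[of P y] insert.prems(2,3) insert.hyps by auto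
    then show ?thesis using True by (intro insert.prems(1)[of c]) auto
  next
    case False
    then obtain i0 where i0: "i0 \<in> P" "y i0 j0 \<noteq> 0" by auto
    define P' where "P' = P - {i0}"
    define y' where "y' i j = y i j - (y i j0 / y i0 j0) * y i0 j" for i j
    have finP': "finite P'" and cP': "card J < card P'"
      using insert.prems insert.hyps i0 unfolding P'_def by auto
    obtain c' where c': "\<exists>i\<in>P'. c' i \<noteq> 0" "\<And>j. j \<in> J \<Longrightarrow> (\<Sum>i\<in>P'. c' i * y' i j) = 0"
      using insert.IH[OF _ finP' cP', of y'] by blast
    define c where "c i = (if i = i0 then - (\<Sum>i\<in>P'. c' i * y i j0) / y i0 j0 else c' i)" for i
    have elim: "(\<Sum>i\<in>P. c i * y i j) = (\<Sum>i\<in>P'. c' i * y' i j)" for j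
    proof -
      have "(\<Sum>i\<in>P. c i * y i j) = c i0 * y i0 j + (\<Sum>i\<in>P'. c i * y i j)"
        unfolding P'_def using i0 insert.prems(2) by (simp add: sum.remove)
      also have "(\<Sum>i\<in>P'. c i * y i j) = (\<Sum>i\<in>P'. c' i * y i j)"
        unfolding c_def P'_def by (intro sum.cong) auto
      also have "c i0 * y i0 j + (\<Sum>i\<in>P'. c' i * y i j) = (\<Sum>i\<in>P'. c' i * y i j) - (\<Sum>i\<in>P'. c' i * y i j0) * (y i0 j / y i0 j0)"
        by (simp add: c_def algebra_simps)
      also have "\<dots> = (\<Sum>i\<in>P'. c' i * y i j - c' i * y i j0 * (y i0 j / y i0 j0))"
        by (simp add: sum_subtractf sum_distrib_right sum_divide_distrib)
      also have "\<dots> = (\<Sum>i\<in>P'. c' i * y' i j)"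
        unfolding y'_def by (simp add: algebra_simps)
      finally show ?thesis .
    qed
    have "y' i j0 = 0" for i unfolding y'_def using i0 by simp
    then have "(\<Sum>i\<in>P. c i * y i j) = 0" if "j \<in> insert j0 J" for j
      using that c'(2) elim by auto
    moreover have "\<exists>i\<in>P. c i \<noteq> 0" using c'(1) unfolding c_def P'_def by auto
    ultimately show ?thesis using insert.prems(1) by blast
  qed
qed

lemma bilinear_sum_lincomb:
  fixes B :: "nat \<Rightarrow> nat \<Rightarrow> 'a :: comm_semiring_0"
  shows "(\<Sum>a<n. \<Sum>b<n. B a b * (\<Sum>i\<in>P. c i * u i a) * (\<Sum>j\<in>P. c j * u j b)) =
    (\<Sum>i\<in>P. \<Sum>j\<in>P. c i * c j * (\<Sum>a<n. \<Sum>b<n. B a b * u i a * u j b))"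
proof -
  have "(\<Sum>a<n. \<Sum>b<n. B a b * (\<Sum>i\<in>P. c i * u i a) * (\<Sum>j\<in>P. c j * u j b)) =
    (\<Sum>a<n. \<Sum>b<n. \<Sum>i\<in>P. \<Sum>j\<in>P. c i * c j * (B a b * u i a * u j b))"
    by (simp add: sum_distrib_left sum_distrib_right mult_ac)
  also have "\<dots> = (\<Sum>a<n. \<Sum>i\<in>P. \<Sum>b<n. \<Sum>j\<in>P. c i * c j * (B a b * u i a * u j b))"
    by (rule sum.cong[OF refl], rule sum.swap)
  also have "\<dots> = (\<Sum>i\<in>P. \<Sum>a<n. \<Sum>b<n. \<Sum>j\<in>P. c i * c j * (B a b * u i a * u j b))"
    by (rule sum.swap)
  also have "\<dots> = (\<Sum>i\<in>P. \<Sum>a<n. \<Sum>j\<in>P. \<Sum>b<n. c i * c j * (B a b * u i a * u j b))"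
    by (rule sum.cong[OF refl], rule sum.cong[OF refl], rule sum.swap)
  also have "\<dots> = (\<Sum>i\<in>P. \<Sum>j\<in>P. \<Sum>a<n. \<Sum>b<n. c i * c j * (B a b * u i a * u j b))"
    by (rule sum.cong[OF refl], rule sum.swap)
  also have "\<dots> = (\<Sum>i\<in>P. \<Sum>j\<in>P. c i * c j * (\<Sum>a<n. \<Sum>b<n. B a b * u i a * u j b))"
    by (simp add: sum_distrib_left)
  finally show ?thesis .
qed

lemma sum_lincomb_product:
  fixes u v :: "'i \<Rightarrow> nat \<Rightarrow> 'a :: comm_semiring_0"
  shows "(\<Sum>a<n. (\<Sum>i\<in>P. c i * u i a) * (\<Sum>j\<in>P. c j * v j a)) =
    (\<Sum>i\<in>P. \<Sum>j\<in>P. c i * c j * (\<Sum>a<n. u i a * v j a))"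
proof -
  have "(\<Sum>a<n. (\<Sum>i\<in>P. c i * u i a) * (\<Sum>j\<in>P. c j * v j a)) =
    (\<Sum>a<n. \<Sum>i\<in>P. \<Sum>j\<in>P. c i * c j * (u i a * v j a))"
    by (simp add: sum_product mult_ac)
  also have "\<dots> = (\<Sum>i\<in>P. \<Sum>a<n. \<Sum>j\<in>P. c i * c j * (u i a * v j a))" by (rule sum.swap)
  also have "\<dots> = (\<Sum>i\<in>P. \<Sum>j\<in>P. \<Sum>a<n. c i * c j * (u i a * v j a))"
    by (rule sum.cong[OF refl], rule sum.swap)
  also have "\<dots> = (\<Sum>i\<in>P. \<Sum>j\<in>P. c i * c j * (\<Sum>a<n. u i a * v j a))"
    by (simp add: sum_distrib_left)
  finally show ?thesis .
qed

text \<open>With \<open>t\<close> the \<open>k\<close>-th largest entry, every entry above \<open>t\<close> is among the \<open>k\<close> largest.\<close>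
lemma sum_max_diff_sorted:
  fixes L :: "real list"
  assumes sorted: "sorted_wrt (\<ge>) L" and k: "0 < k" "k \<le> length L"
  shows "(\<Sum>x\<leftarrow>L. max (x - L!(k - 1)) 0) = (\<Sum>i<k. L!i) - real k * L!(k - 1)"
proof -
  define t where "t = L!(k - 1)"
  have ge: "L!i \<ge> t" if "i < k" for i
    unfolding t_def using sorted that k by (cases "i = k - 1") (auto simp: sorted_wrt_iff_nth_less)
  have le: "L!i \<le> t" if "k \<le> i" "i < length L" for i
    unfolding t_def using sorted that k by (auto simp: sorted_wrt_iff_nth_less)
  have "(\<Sum>x\<leftarrow>L. max (x - t) 0) = (\<Sum>i<k. max (L!i - t) 0) + (\<Sum>i\<in>{k..<length L}. max (L!i - t) 0)"
    using k by (simp add: sum_list_sum_nth atLeast0LessThan[symmetric] sum.atLeastLessThan_concat)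
  also have "(\<Sum>i\<in>{k..<length L}. max (L!i - t) 0) = 0"
    using le by (intro sum.neutral) auto
  also have "(\<Sum>i<k. max (L!i - t) 0) = (\<Sum>i<k. L!i) - real k * t"
    using ge by (simp add: sum_subtractf)
  finally show ?thesis unfolding t_def by simp
qed

lemma sum_list_map_mset_eq:
  fixes f :: "'a \<Rightarrow> 'b :: comm_monoid_add"
  assumes "mset xs = mset ys"
  shows "(\<Sum>x\<leftarrow>xs. f x) = (\<Sum>x\<leftarrow>ys. f x)"
proof -
  have "(\<Sum>x\<leftarrow>xs. f x) = (\<Sum>x\<in>#mset xs. f x)"
    by (simp only: sum_mset_sum_list mset_map[symmetric])
  also have "\<dots> = (\<Sum>x\<leftarrow>ys. f x)"
    unfolding assms by (simp only: sum_mset_sum_list mset_map[symmetric])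
  finally show ?thesis .
qed

lemma weighted_sum_le_sum_largest:
  fixes d :: "nat \<Rightarrow> nat" and w :: "nat \<Rightarrow> real"
  assumes w: "\<And>a. a < n \<Longrightarrow> 0 \<le> w a \<and> w a \<le> 1"
    and sw: "(\<Sum>a<n. w a) = real k" and kn: "k \<le> n"
  shows "(\<Sum>a<n. real (d a) * w a) \<le> real (sum_list (take k (rev (sort (map d [0..<n])))))"
proof (cases "k = 0")
  case True
  then have "\<forall>a\<in>{..<n}. w a = 0" using w sw by (subst sum_nonneg_eq_0_iff[symmetric]) auto
  then show ?thesis using True by simp
next
  case False
  define L where "L = map real (rev (sort (map d [0..<n])))"
  define t where "t = L!(k - 1)"
  have lenL: "length L = n" unfolding L_def by simp
  have sortedL: "sorted_wrt (\<ge>) L" unfolding L_def by (simp add: sorted_wrt_rev sorted_wrt_map)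
  have mset_L: "mset L = mset (map (\<lambda>a. real (d a)) [0..<n])"
    unfolding L_def by (simp add: multiset.map_comp o_def)
  have sum_list_L: "(\<Sum>x\<leftarrow>L. f x) = (\<Sum>a<n. f (real (d a)))" for f :: "real \<Rightarrow> real"
  proof -
    have "(\<Sum>x\<leftarrow>L. f x) = (\<Sum>x\<leftarrow>map (\<lambda>a. real (d a)) [0..<n]. f x)"
      using mset_L by (rule sum_list_map_mset_eq)
    also have "\<dots> = (\<Sum>a<n. f (real (d a)))" by (simp add: sum_list_sum_nth atLeast0LessThan)
    finally show ?thesis .
  qed
  have "(\<Sum>a<n. real (d a) * w a) = (\<Sum>a<n. (real (d a) - t) * w a + t * w a)"
    by (simp add: algebra_simps)
  also have "\<dots> = (\<Sum>a<n. (real (d a) - t) * w a) + t * (\<Sum>a<n. w a)"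
    by (simp add: sum.distrib sum_distrib_left)
  also have "(\<Sum>a<n. (real (d a) - t) * w a) \<le> (\<Sum>a<n. max (real (d a) - t) 0)"
  proof (rule sum_mono)
    fix a assume "a \<in> {..<n}"
    then have "0 \<le> w a" "w a \<le> 1" using w by auto
    then show "(real (d a) - t) * w a \<le> max (real (d a) - t) 0"
      by (simp add: max_def mult_left_le mult_nonpos_nonneg)
  qed
  also have "\<dots> = (\<Sum>x\<leftarrow>L. max (x - t) 0)" using sum_list_L by simp
  also have "\<dots> = (\<Sum>i<k. L!i) - real k * t"
    unfolding t_def using sum_max_diff_sorted[OF sortedL] False kn lenL by simp
  also have "(\<Sum>i<k. L!i) = real (sum_list (take k (rev (sort (map d [0..<n])))))"
    using kn lenL unfolding L_def by (simp add: sum_list_sum_nth atLeast0LessThan)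
  finally show ?thesis using sw by simp
qed

section \<open>Clique partitions\<close>

lemma clique_partition_subset:
  assumes "clique_partition n E F" and "C \<in> F"
  shows "C \<subseteq> {..<n}"
proof -
  have "C \<subseteq> {0..<n}" using assms unfolding clique_partition_def is_clique_def by blast
  then show ?thesis by (simp add: atLeast0LessThan)
qed

lemma clique_partition_finite:
  assumes "clique_partition n E F"
  shows "finite F"
  by (rule finite_subset[of _ "Pow {..<n}"]) (auto dest: clique_partition_subset[OF assms])

lemma finite_clique_partitions: "finite {F. clique_partition n E F}"
  by (rule finite_subset[of _ "Pow (Pow {..<n})"]) (auto dest: clique_partition_subset)

lemma finite_top_clique_degree_sums:
  "finite {top_clique_degree_sum n F k | F. clique_partition n E F}"
  using finite_clique_partitions by simp

lemma edge_clique_partition: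
  assumes "simple_graph n E"
  shows "clique_partition n E {{a, b} | a b. E a b}"
  unfolding clique_partition_def
proof (intro conjI allI impI ballI)
  fix C assume "C \<in> {{a, b} | a b. E a b}"
  then show "is_clique n E C"
    using assms unfolding is_clique_def simple_graph_def by auto
next
  fix u v assume uv: "E u v"
  then have "u \<noteq> v" using assms unfolding simple_graph_def by auto
  with uv show "\<exists>!C. C \<in> {{a, b} | a b. E a b} \<and> u \<in> C \<and> v \<in> C"
    by (intro ex1I[of _ "{u, v}"]) auto
qed

lemma card_cliques_containing_pair:
  assumes cp: "clique_partition n E F" and simple: "simple_graph n E"
  shows "card {C \<in> F. a \<in> C \<and> b \<in> C} =
    (if a = b then clique_degree F a else if E a b then 1 else 0)"
proof (cases "a = b")
  case True
  then show ?thesis unfolding clique_degree_def by simp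
next
  case False
  show ?thesis
  proof (cases "E a b")
    case True
    then obtain C where C: "C \<in> F" "a \<in> C" "b \<in> C"
      and unique: "\<And>C'. C' \<in> F \<and> a \<in> C' \<and> b \<in> C' \<Longrightarrow> C' = C"
      using cp unfolding clique_partition_def by metis
    have "{C \<in> F. a \<in> C \<and> b \<in> C} = {C}"
    proof
      show "{C \<in> F. a \<in> C \<and> b \<in> C} \<subseteq> {C}" using unique by blast
    qed (use C in simp)
    then show ?thesis using False True by simp
  next
    case nE: False
    then have "{C \<in> F. a \<in> C \<and> b \<in> C} = {}"
      using cp False unfolding clique_partition_def is_clique_def by blast
    then have "card {C \<in> F. a \<in> C \<and> b \<in> C} = 0" by (simp only: card.empty)
    then show ?thesis using False nE by simp
  qed
qed

definition adj_form :: "nat \<Rightarrow> (nat \<Rightarrow> nat \<Rightarrow> bool) \<Rightarrow> (nat \<Rightarrow> real) \<Rightarrow> (nat \<Rightarrow> real) \<Rightarrow> real" where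
  "adj_form n E x y = (\<Sum>a<n. \<Sum>b<n. (if E a b then 1 else 0) * x a * y b)"

lemma square_sum_subset:
  fixes x :: "nat \<Rightarrow> real"
  assumes "C \<subseteq> {..<n}"
  shows "(\<Sum>v\<in>C. x v)\<^sup>2 = (\<Sum>a<n. \<Sum>b<n. if a \<in> C \<and> b \<in> C then x a * x b else 0)"
proof -
  have "(\<Sum>v\<in>C. x v) = (\<Sum>a<n. if a \<in> C then x a else 0)"
    using assms by (simp add: sum.inter_restrict[symmetric] Int_absorb1)
  then have "(\<Sum>v\<in>C. x v)\<^sup>2 =
      (\<Sum>a<n. \<Sum>b<n. (if a \<in> C then x a else 0) * (if b \<in> C then x b else 0))"
    by (simp only: power2_eq_square sum_product)
  also have "\<dots> = (\<Sum>a<n. \<Sum>b<n. if a \<in> C \<and> b \<in> C then x a * x b else 0)"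
    by (intro sum.cong refl) simp
  finally show ?thesis .
qed

text \<open>This is the matrix identity \<open>A = M M\<^sup>T - D\<close>, with \<open>M\<close> the vertex-clique incidence
  matrix of the partition and \<open>D\<close> the diagonal matrix of clique-degrees.\<close>
lemma adj_form_clique_partition:
  fixes x :: "nat \<Rightarrow> real"
  assumes cp: "clique_partition n E F" and simple: "simple_graph n E"
  shows "adj_form n E x x =
    (\<Sum>C\<in>F. (\<Sum>v\<in>C. x v)\<^sup>2) - (\<Sum>a<n. real (clique_degree F a) * (x a)\<^sup>2)"
proof -
  have "(\<Sum>C\<in>F. (\<Sum>v\<in>C. x v)\<^sup>2) =
      (\<Sum>C\<in>F. \<Sum>a<n. \<Sum>b<n. if a \<in> C \<and> b \<in> C then x a * x b else 0)"
    using clique_partition_subset[OF cp] by (intro sum.cong refl square_sum_subset)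
  also have "\<dots> = (\<Sum>a<n. \<Sum>b<n. \<Sum>C\<in>F. if a \<in> C \<and> b \<in> C then x a * x b else 0)"
    by (subst sum.swap, rule sum.cong[OF refl], rule sum.swap)
  also have "\<dots> = (\<Sum>a<n. \<Sum>b<n. x a * x b * real (card {C \<in> F. a \<in> C \<and> b \<in> C}))"
    using clique_partition_finite[OF cp] by (intro sum.cong refl) (simp add: sum.inter_filter[symmetric])
  also have "\<dots> = (\<Sum>a<n. \<Sum>b<n. (if a = b then real (clique_degree F a) * (x a)\<^sup>2 else 0)
      + (if E a b then 1 else 0) * x a * x b)"
    using simple unfolding card_cliques_containing_pair[OF cp simple] simple_graph_def
    by (intro sum.cong refl) (auto simp: power2_eq_square)
  also have "\<dots> = (\<Sum>a<n. real (clique_degree F a) * (x a)\<^sup>2) + adj_form n E x x"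
    unfolding adj_form_def by (simp add: sum.distrib)
  finally show ?thesis by simp
qed

lemma top_clique_degree_sum_regular:
  assumes "\<And>a. a < n \<Longrightarrow> clique_degree F a = t" and "k \<le> n"
  shows "top_clique_degree_sum n F k = k * t"
proof -
  have "map (clique_degree F) [0..<n] = replicate n t"
    using assms(1) by (intro nth_equalityI) auto
  then show ?thesis
    unfolding top_clique_degree_sum_def using assms(2)
    by (simp add: sorted_sort_id sorted_replicate take_replicate min_def sum_list_replicate)
qed

section \<open>Energy bounds from an orthonormal eigenbasis\<close>

lemma adj_matrix_carrier: "adj_matrix n E \<in> carrier_mat n n"
  unfolding adj_matrix_def by simp

lemma adj_matrix_index [simp]:
  "a < n \<Longrightarrow> b < n \<Longrightarrow> adj_matrix n E $$ (a, b) = (if E a b then 1 else 0)"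
  unfolding adj_matrix_def by simp

lemma adj_matrix_symmetric:
  assumes "simple_graph n E"
  shows "(adj_matrix n E)\<^sup>T = adj_matrix n E"
  using assms unfolding simple_graph_def by (intro eq_matI) (auto simp: adj_matrix_def)

locale adjacency_eigenbasis =
  fixes n :: nat and E :: "nat \<Rightarrow> nat \<Rightarrow> bool" and us :: "real vec list" and es :: "real list"
  assumes simple: "simple_graph n E"
    and basis: "orthonormal_basis n us"
    and length_es: "length es = n"
    and eigen: "\<And>i. i < n \<Longrightarrow> adj_matrix n E *\<^sub>v us!i = es!i \<cdot>\<^sub>v us!i"
begin

lemma eigenvector_carrier: "i < n \<Longrightarrow> us!i \<in> carrier_vec n"
  using basis orthonormal_listD(1) unfolding orthonormal_basis_def by auto

lemma eigenvectors_scalar_prod: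
  "i < n \<Longrightarrow> j < n \<Longrightarrow> us!i \<bullet> us!j = (if i = j then 1 else 0)"
  using basis orthonormal_listD(2) unfolding orthonormal_basis_def by auto

lemma inner_eigenvectors:
  assumes "i < n" "j < n"
  shows "(\<Sum>a<n. us!i$a * us!j$a) = (if i = j then 1 else 0)"
  using eigenvectors_scalar_prod[OF assms] eigenvector_carrier[OF assms(2)]
  by (simp add: scalar_prod_def atLeast0LessThan)

lemma adj_form_eigenvectors:
  assumes i: "i < n" and j: "j < n"
  shows "adj_form n E (\<lambda>a. us!i$a) (\<lambda>b. us!j$b) = (if i = j then es!i else 0)"
proof -
  have "adj_form n E (\<lambda>a. us!i$a) (\<lambda>b. us!j$b) =
      (\<Sum>a<n. \<Sum>b<n. adj_matrix n E $$ (a, b) * us!i$a * us!j$b)"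
    unfolding adj_form_def by (intro sum.cong refl) simp
  also have "\<dots> = us!i \<bullet> (adj_matrix n E *\<^sub>v us!j)"
    using scalar_prod_mult_mat_vec_sum[OF adj_matrix_carrier eigenvector_carrier[OF i]
        eigenvector_carrier[OF j]] by simp
  also have "\<dots> = es!j * (us!i \<bullet> us!j)"
    using eigen[OF j] eigenvector_carrier[OF i] eigenvector_carrier[OF j] by simp
  finally show ?thesis using eigenvectors_scalar_prod[OF i j] by simp
qed

lemma adj_eigenvalues_eq: "adj_eigenvalues n E = mset es"
  unfolding adj_eigenvalues_def
  using char_poly_orthonormal_eigenbasis[OF adj_matrix_carrier basis length_es eigen]
  by (simp add: proots_prod_linear_factors)

definition negative_eigenindices :: "nat set" where
  "negative_eigenindices = {i. i < n \<and> es!i < 0}"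

lemma card_negative_eigenindices: "card negative_eigenindices = neg_inertia n E"
proof -
  have "filter_mset (\<lambda>x. x < 0) (mset es) = mset (filter (\<lambda>x. x < 0) es)" by simp
  then have "neg_inertia n E = length (filter (\<lambda>x. x < 0) es)"
    unfolding neg_inertia_def adj_eigenvalues_eq by (simp only: size_mset)
  also have "\<dots> = card negative_eigenindices"
    unfolding negative_eigenindices_def length_filter_conv_card length_es ..
  finally show ?thesis by simp
qed

lemma negative_eigenindices_subset: "negative_eigenindices \<subseteq> {..<n}"
  unfolding negative_eigenindices_def by auto

lemma finite_negative_eigenindices: "finite negative_eigenindices"
  using negative_eigenindices_subset by (rule finite_subset) simp

lemma neg_inertia_le: "neg_inertia n E \<le> n"
  using card_negative_eigenindices card_mono[OF _ negative_eigenindices_subset] by simp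

lemma graph_energy_eq: "graph_energy n E = - 2 * (\<Sum>i\<in>negative_eigenindices. es!i)"
proof -
  have "image_mset abs (mset es) = mset (map abs es)" by simp
  then have "graph_energy n E = sum_list (map abs es)"
    unfolding graph_energy_def adj_eigenvalues_eq by (simp only: sum_mset_sum_list)
  also have "\<dots> = (\<Sum>i<n. \<bar>es!i\<bar>)"
    using length_es by (simp add: sum_list_sum_nth atLeast0LessThan)
  also have "\<dots> = (\<Sum>i<n. es!i - 2 * (if es!i < 0 then es!i else 0))"
    by (intro sum.cong) auto
  also have "\<dots> = (\<Sum>i<n. es!i) - 2 * (\<Sum>i<n. if es!i < 0 then es!i else 0)"
    by (simp add: sum_subtractf sum_distrib_left)
  also have "(\<Sum>i<n. if es!i < 0 then es!i else 0) = (\<Sum>i\<in>negative_eigenindices. es!i)"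
  proof -
    have "negative_eigenindices = {i \<in> {..<n}. es!i < 0}"
      unfolding negative_eigenindices_def by auto
    then show ?thesis by (simp only: sum.inter_filter finite_lessThan)
  qed
  also have "(\<Sum>i<n. es!i) = (\<Sum>a<n. adj_matrix n E $$ (a, a))"
    by (rule sum_orthonormal_eigenvalues_eq_trace[OF adj_matrix_carrier basis eigen])
  also have "\<dots> = 0"
    using simple unfolding simple_graph_def by (intro sum.neutral) simp
  finally show ?thesis by simp
qed

lemma neg_eigenvalue_le_clique_degree_form:
  assumes cp: "clique_partition n E F" and i: "i < n"
  shows "- es!i \<le> (\<Sum>a<n. real (clique_degree F a) * (us!i$a)\<^sup>2)"
proof -
  have "es!i = (\<Sum>C\<in>F. (\<Sum>v\<in>C. us!i$v)\<^sup>2) - (\<Sum>a<n. real (clique_degree F a) * (us!i$a)\<^sup>2)"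
    using adj_form_eigenvectors[OF i i] adj_form_clique_partition[OF cp simple] by simp
  moreover have "(\<Sum>C\<in>F. (\<Sum>v\<in>C. us!i$v)\<^sup>2) \<ge> 0" by (intro sum_nonneg) simp
  ultimately show ?thesis by linarith
qed

lemma energy_le_top_clique_degree_sum:
  assumes cp: "clique_partition n E F"
  shows "graph_energy n E \<le> 2 * real (top_clique_degree_sum n F (neg_inertia n E))"
proof -
  let ?N = negative_eigenindices
  define w where "w a = (\<Sum>i\<in>?N. (us!i$a)\<^sup>2)" for a
  have "- (\<Sum>i\<in>?N. es!i) \<le> (\<Sum>i\<in>?N. \<Sum>a<n. real (clique_degree F a) * (us!i$a)\<^sup>2)"
    unfolding sum_negf[symmetric] using negative_eigenindices_subset
    by (intro sum_mono neg_eigenvalue_le_clique_degree_form[OF cp]) auto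
  also have "\<dots> = (\<Sum>a<n. real (clique_degree F a) * w a)"
    unfolding w_def by (subst sum.swap) (simp add: sum_distrib_left)
  also have "\<dots> \<le> real (top_clique_degree_sum n F (neg_inertia n E))"
    unfolding top_clique_degree_sum_def
  proof (rule weighted_sum_le_sum_largest)
    fix a assume a: "a < n"
    have "w a \<le> (\<Sum>i<n. (us!i$a)\<^sup>2)"
      unfolding w_def by (rule sum_mono2[OF _ negative_eigenindices_subset]) auto
    also have "\<dots> = 1"
      using orthonormal_basis_row_sum[OF basis a a] by (simp add: power2_eq_square)
    finally show "0 \<le> w a \<and> w a \<le> 1" unfolding w_def by (auto intro: sum_nonneg)
  next
    have "(\<Sum>a<n. w a) = (\<Sum>i\<in>?N. \<Sum>a<n. (us!i$a)\<^sup>2)" unfolding w_def by (rule sum.swap)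
    also have "\<dots> = (\<Sum>i\<in>?N. 1)"
      using inner_eigenvectors negative_eigenindices_subset
      by (intro sum.cong refl) (auto simp: power2_eq_square)
    finally show "(\<Sum>a<n. w a) = real (neg_inertia n E)"
      using card_negative_eigenindices by simp
  qed (rule neg_inertia_le)
  finally show ?thesis using graph_energy_eq by simp
qed

lemma eigenvector_lincomb_forms:
  fixes c :: "nat \<Rightarrow> real"
  assumes P: "P \<subseteq> {..<n}"
  defines "x \<equiv> \<lambda>a. \<Sum>i\<in>P. c i * us!i$a"
  shows "adj_form n E x x = (\<Sum>i\<in>P. (c i)\<^sup>2 * es!i)"
    and "(\<Sum>a<n. (x a)\<^sup>2) = (\<Sum>i\<in>P. (c i)\<^sup>2)"
proof -
  have fin: "finite P" using P by (rule finite_subset) simp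
  have Pn: "i < n" if "i \<in> P" for i using P that by auto
  have "adj_form n E x x =
      (\<Sum>i\<in>P. \<Sum>j\<in>P. c i * c j * adj_form n E (\<lambda>a. us!i$a) (\<lambda>b. us!j$b))"
    unfolding x_def adj_form_def by (rule bilinear_sum_lincomb)
  also have "\<dots> = (\<Sum>i\<in>P. \<Sum>j\<in>P. if i = j then c i * c j * es!i else 0)"
    using Pn by (intro sum.cong refl) (simp add: adj_form_eigenvectors)
  finally show "adj_form n E x x = (\<Sum>i\<in>P. (c i)\<^sup>2 * es!i)"
    using fin by (simp add: power2_eq_square)
  have "(\<Sum>a<n. (x a)\<^sup>2) = (\<Sum>i\<in>P. \<Sum>j\<in>P. c i * c j * (\<Sum>a<n. us!i$a * us!j$a))"
    unfolding x_def power2_eq_square by (rule sum_lincomb_product)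
  also have "\<dots> = (\<Sum>i\<in>P. \<Sum>j\<in>P. if i = j then c i * c j else 0)"
    using Pn by (intro sum.cong refl) (simp add: inner_eigenvectors)
  finally show "(\<Sum>a<n. (x a)\<^sup>2) = (\<Sum>i\<in>P. (c i)\<^sup>2)"
    using fin by (simp add: power2_eq_square)
qed

text \<open>A combination of more than \<open>|F|\<close> eigenvectors with eigenvalues above \<open>-t\<close> can be
  chosen orthogonal to every clique indicator; the form of \<open>A + t I = M M\<^sup>T\<close> vanishes on it
  although it is positive there.\<close>
lemma card_eigenvalues_gt_le_card:
  assumes cp: "clique_partition n E F" and deg: "\<And>a. a < n \<Longrightarrow> clique_degree F a = t"
  shows "card {i. i < n \<and> - real t < es!i} \<le> card F"
proof (rule ccontr)
  define P where "P = {i. i < n \<and> - real t < es!i}"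
  have P: "P \<subseteq> {..<n}" unfolding P_def by auto
  assume "\<not> card {i. i < n \<and> - real t < es!i} \<le> card F"
  then have "card F < card P" unfolding P_def by simp
  have "finite P" using P by (rule finite_subset) simp
  from this \<open>card F < card P\<close> obtain c where c: "\<exists>i\<in>P. c i \<noteq> 0"
    and orth: "\<And>C. C \<in> F \<Longrightarrow> (\<Sum>i\<in>P. c i * (\<Sum>v\<in>C. us!i$v)) = 0"
    by (rule homogeneous_system_nontrivial_solution[OF clique_partition_finite[OF cp],
          where y = "\<lambda>i C. \<Sum>v\<in>C. us!i$v"]) (rule that)
  define x where "x a = (\<Sum>i\<in>P. c i * us!i$a)" for a
  have "(\<Sum>v\<in>C. x v) = 0" if "C \<in> F" for C
  proof -
    have "(\<Sum>v\<in>C. x v) = (\<Sum>i\<in>P. c i * (\<Sum>v\<in>C. us!i$v))"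
      unfolding x_def by (subst sum.swap) (simp add: sum_distrib_left)
    then show ?thesis using orth[OF that] by simp
  qed
  then have "adj_form n E x x = - real t * (\<Sum>a<n. (x a)\<^sup>2)"
    using adj_form_clique_partition[OF cp simple, of x] deg by (simp add: sum_distrib_left sum_negf)
  then have "(\<Sum>i\<in>P. (c i)\<^sup>2 * es!i) + real t * (\<Sum>i\<in>P. (c i)\<^sup>2) = 0"
    using eigenvector_lincomb_forms[OF P, of c, folded x_def] by simp
  then have "(\<Sum>i\<in>P. (c i)\<^sup>2 * (es!i + real t)) = 0"
    by (simp add: ring_distribs sum.distrib sum_distrib_left mult.commute)
  moreover have "(\<Sum>i\<in>P. (c i)\<^sup>2 * (es!i + real t)) > 0"
  proof -
    obtain i0 where "i0 \<in> P" "c i0 \<noteq> 0" using c by blast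
    with \<open>finite P\<close> show ?thesis
      by (intro sum_pos2[of P i0]) (auto simp: P_def add.commute)
  qed
  ultimately show False by simp
qed

lemma energy_ge_clique_regular:
  assumes cp: "clique_partition n E F" and card: "card F = n - neg_inertia n E"
    and deg: "\<And>a. a < n \<Longrightarrow> clique_degree F a = t"
  shows "2 * real (neg_inertia n E * t) \<le> graph_energy n E"
proof (cases "t = 0")
  case True
  have "(\<Sum>i\<in>negative_eigenindices. es!i) \<le> 0"
    by (intro sum_nonpos) (simp add: negative_eigenindices_def)
  then show ?thesis using True graph_energy_eq by simp
next
  case False
  let ?N = negative_eigenindices
  define P where "P = {i. i < n \<and> - real t < es!i}"
  define Q where "Q = {i. i < n \<and> es!i \<le> - real t}"
  have P: "P \<subseteq> {..<n}" unfolding P_def by auto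
  have "Q = {..<n} - P" unfolding Q_def P_def by auto
  then have "card Q = n - card P" using card_Diff_subset[OF finite_subset[OF P] P] by simp
  moreover have "card P \<le> card F"
    unfolding P_def by (rule card_eigenvalues_gt_le_card[OF cp]) (rule deg)
  ultimately have "card ?N \<le> card Q"
    using card card_negative_eigenindices neg_inertia_le by linarith
  moreover have QN: "Q \<subseteq> ?N"
    using False unfolding Q_def negative_eigenindices_def by auto
  moreover have "card Q \<le> card ?N" by (rule card_mono[OF finite_negative_eigenindices QN])
  ultimately have "Q = ?N" by (intro card_subset_eq[OF finite_negative_eigenindices QN]) simp
  then have "es!i \<le> - real t" if "i \<in> ?N" for i
    using that unfolding \<open>Q = ?N\<close>[symmetric] Q_def by simp
  then have "(\<Sum>i\<in>?N. es!i) \<le> (\<Sum>i\<in>?N. - real t)" by (rule sum_mono)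
  also have "\<dots> = - (real (neg_inertia n E) * real t)"
    unfolding card_negative_eigenindices[symmetric] by simp
  finally show ?thesis unfolding graph_energy_eq of_nat_mult by linarith
qed

lemma energy_le_Min_top_clique_degree_sum:
  "graph_energy n E \<le>
    2 * real (Min {top_clique_degree_sum n F (neg_inertia n E) | F. clique_partition n E F})"
proof -
  let ?S = "{top_clique_degree_sum n F (neg_inertia n E) | F. clique_partition n E F}"
  have "?S \<noteq> {}" using edge_clique_partition[OF simple] by auto
  with finite_top_clique_degree_sums have "Min ?S \<in> ?S" by (rule Min_in)
  then show ?thesis using energy_le_top_clique_degree_sum by auto
qed

lemma energy_eq_Min_top_clique_degree_sum:
  assumes cp: "clique_partition n E F" and card: "card F = n - neg_inertia n E"
    and regular: "clique_regular n F"
  shows "graph_energy n E =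
    2 * real (Min {top_clique_degree_sum n F (neg_inertia n E) | F. clique_partition n E F})"
proof -
  let ?S = "{top_clique_degree_sum n F (neg_inertia n E) | F. clique_partition n E F}"
  have deg: "clique_degree F a = clique_degree F 0" if "a < n" for a
    using clique_regular_def[THEN iffD1, OF regular, rule_format, of a 0] that by simp
  have "top_clique_degree_sum n F (neg_inertia n E) \<in> ?S" using cp by blast
  then have "Min ?S \<le> top_clique_degree_sum n F (neg_inertia n E)"
    by (rule Min_le[OF finite_top_clique_degree_sums])
  also have "\<dots> = neg_inertia n E * clique_degree F 0"
    by (rule top_clique_degree_sum_regular) (fact deg, fact neg_inertia_le)
  finally have "Min ?S \<le> neg_inertia n E * clique_degree F 0" .
  moreover have "2 * real (neg_inertia n E * clique_degree F 0) \<le> graph_energy n E"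
    by (rule energy_ge_clique_regular[OF cp card]) (rule deg)
  ultimately show ?thesis using energy_le_Min_top_clique_degree_sum by linarith
qed

end

theorem mainTheorem12:
  fixes n :: nat and E :: "nat \<Rightarrow> nat \<Rightarrow> bool"
  assumes "simple_graph n E"
  shows "graph_energy n E \<le>
           2 * real (Min {top_clique_degree_sum n F (neg_inertia n E) | F. clique_partition n E F})
         \<and> ((\<exists>F. clique_partition n E F \<and> card F = cp n E \<and> cp n E = n - neg_inertia n E
                \<and> clique_regular n F) \<longrightarrow>
            graph_energy n E =
              2 * real (Min {top_clique_degree_sum n F (neg_inertia n E) | F. clique_partition n E F}))"
proof -
  obtain us es where "orthonormal_basis n us" "length es = n"
    and "\<And>i. i < n \<Longrightarrow> adj_matrix n E *\<^sub>v us!i = es!i \<cdot>\<^sub>v us!i"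
    using symmetric_orthonormal_eigenbasis[OF adj_matrix_carrier adj_matrix_symmetric[OF assms]]
    by blast
  then interpret adjacency_eigenbasis n E us es
    using assms by unfold_locales
  show ?thesis
  proof (intro conjI impI)
    assume "\<exists>F. clique_partition n E F \<and> card F = cp n E \<and> cp n E = n - neg_inertia n E
      \<and> clique_regular n F"
    then obtain F where "clique_partition n E F" "card F = n - neg_inertia n E"
      "clique_regular n F" by auto
    then show "graph_energy n E =
        2 * real (Min {top_clique_degree_sum n F (neg_inertia n E) | F. clique_partition n E F})"
      by (rule energy_eq_Min_top_clique_degree_sum)
  qed (rule energy_le_Min_top_clique_degree_sum)
qed

end
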